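(* Let $n\ge 2$ and $k\ge 1$. If there exists a set of $k$ Gozinta Boxes in dimension $n$, then there exists a set of $k$ Gozinta Boxes in dimension $n-1$.
   Context: An $n$-dimensional box $A$ has closed side lengths $a_1\le\dots\le a_n$ (positive reals). A state of $A$ is either closed or expanded along one side $i$: $a_i$ is replaced by $a_i'$ with $a_i\le a_i'\le 2a_i$, other sides unchanged (only one side can expand). The dimension vector of a state is its side lengths sorted non-decreasingly. A box in some state fits inside another box in some state if each coordinate of the outer one's dimension vector is strictly larger than the corresponding coordinate of the inner one's. An order $X_1,\dots,X_k$ (innermost to outermost) is a possible arrangement if each box can be given a state so that $X_j$ fits inside $X_{j+1}$ for all $j$; states may differ between arrangements. A set of $k$ Gozinta Boxes is a collection of $k$ boxes $A_1,\dots,A_k$ (of the same dimension) such that both the natural order $A_1,\dots,A_k$ and the reverse order $A_k,\dots,A_1$ are possible arrangements. *)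

theory Defs
  imports Complex_Main
begin

definition is_box :: "nat \<Rightarrow> real list \<Rightarrow> bool" where
  "is_box n a \<longleftrightarrow> length a = n \<and> (\<forall>x\<in>set a. x > 0) \<and> sorted a"

definition box_states :: "real list \<Rightarrow> real list set" where
  "box_states a = {a} \<union> {a[i := t] | i t. i < length a \<and> a ! i \<le> t \<and> t \<le> 2 * a ! i}"

definition dim_vec :: "real list \<Rightarrow> real list" where
  "dim_vec s = sort s"

definition fits_inside :: "real list \<Rightarrow> real list \<Rightarrow> bool" where
  "fits_inside s t \<longleftrightarrow> length s = length t \<and>
     (\<forall>i < length s. dim_vec s ! i < dim_vec t ! i)"

text \<open>An order X_1,...,X_k (innermost first) is a possible arrangement.\<close>
definition possible_arrangement :: "real list list \<Rightarrow> bool" where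
  "possible_arrangement Xs \<longleftrightarrow>
     (\<exists>S. length S = length Xs \<and> (\<forall>j < length Xs. S ! j \<in> box_states (Xs ! j)) \<and>
          (\<forall>j. Suc j < length Xs \<longrightarrow> fits_inside (S ! j) (S ! Suc j)))"

definition gozinta :: "nat \<Rightarrow> nat \<Rightarrow> real list list \<Rightarrow> bool" where
  "gozinta n k A \<longleftrightarrow> length A = k \<and> (\<forall>a\<in>set A. is_box n a) \<and>
     possible_arrangement A \<and> possible_arrangement (rev A)"

end

theory Submission
  imports Defs "HOL-Library.Multiset"
begin

text \<open>Drop the shortest closed side of every box. If a box is in some state, then removing
  the smallest entry of that state's dimension vector gives the dimension vector of a state
  of the reduced box: expanding a side other than the shortest keeps the shortest side
  smallest, and expanding the shortest side either keeps it smallest or makes the second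
  shortest side the smallest one, in which case the expanded length (at most twice the
  shortest side) is a legal expansion of the second shortest side. Since dropping the first
  coordinate of two dimension vectors preserves strict coordinatewise domination, both
  arrangements of the original set survive.\<close>

lemma sort_eq_of_mset_eq: "mset s = mset t \<Longrightarrow> sort s = sort t"
  by (metis sorted_list_of_multiset_mset)

lemma tl_sort_eq_sort_if_min:
  fixes m :: "'a::linorder"
  assumes "mset s = mset (m # r)" and "\<forall>x\<in>set r. m \<le> x"
  shows "tl (sort s) = sort r"
proof -
  have "sort s = insort m (sort r)" using sort_eq_of_mset_eq[OF assms(1)] by simp
  also have "\<dots> = m # sort r" using assms(2) by (simp add: insort_is_Cons)
  finally show ?thesis by simp
qed

lemma box_states_length: "s \<in> box_states a \<Longrightarrow> length s = length a"
  unfolding box_states_def by auto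

lemma self_in_box_states: "a \<in> box_states a"
  unfolding box_states_def by simp

lemma update_in_box_states:
  "i < length a \<Longrightarrow> a ! i \<le> t \<Longrightarrow> t \<le> 2 * a ! i \<Longrightarrow> a[i := t] \<in> box_states a"
  unfolding box_states_def by blast

lemma tl_sort_box_state:
  assumes "sorted a" and "s \<in> box_states a"
  shows "\<exists>s' \<in> box_states (tl a). sort s' = tl (sort s)"
proof (cases a)
  case Nil
  then show ?thesis using assms(2) by (simp add: box_states_def)
next
  case (Cons a0 r)
  have a0_min: "\<forall>x\<in>set r. a0 \<le> x" and r_sorted: "sorted r" using assms(1) Cons by auto
  from assms(2) consider "s = a" | i t where "s = a[i := t]" "i < length a" "a ! i \<le> t" "t \<le> 2 * a ! i"
    unfolding box_states_def by blast
  then show ?thesis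
  proof cases
    case 1
    then show ?thesis using assms(1) Cons r_sorted self_in_box_states
      by (metis list.sel(3) sorted_sort_id)
  next
    case (2 i t)
    show ?thesis
    proof (cases i)
      case (Suc j)
      have "a ! i \<in> set r" using 2 Suc Cons by simp
      then have "a0 \<le> t" using 2 a0_min by fastforce
      then have "\<forall>x\<in>set (r[j := t]). a0 \<le> x"
        using set_update_subset_insert[of r j t] a0_min by auto
      then have "tl (sort s) = sort (r[j := t])"
        using 2 Suc Cons by (intro tl_sort_eq_sort_if_min[where m = a0]) simp_all
      moreover have "r[j := t] \<in> box_states r"
        using 2 Suc Cons by (intro update_in_box_states) simp_all
      ultimately show ?thesis unfolding Cons list.sel(3) by (metis (no_types))
    next
      case 0
      then have s: "s = t # r" and t: "a0 \<le> t" "t \<le> 2 * a0" using 2 Cons by simp_all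
      show ?thesis
      proof (cases "\<forall>x\<in>set r. t \<le> x")
        case True
        then have "tl (sort s) = sort r" using s by (intro tl_sort_eq_sort_if_min) simp_all
        then show ?thesis using Cons self_in_box_states by auto
      next
        case False
        then obtain a1 r' where r: "r = a1 # r'" and "a1 < t"
          using r_sorted by (cases r) auto
        then have "tl (sort s) = sort (t # r')"
          using s r_sorted by (intro tl_sort_eq_sort_if_min[where m = a1]) auto
        moreover have "t # r' \<in> box_states r"
          using update_in_box_states[of 0 r t] r \<open>a1 < t\<close> t a0_min by simp
        ultimately show ?thesis unfolding Cons list.sel(3) by (metis (no_types))
      qed
    qed
  qed
qed

lemma fits_inside_tl_sort:
  assumes "fits_inside s t" and "sort s' = tl (sort s)" and "sort t' = tl (sort t)"
  shows "fits_inside s' t'"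
proof -
  have len: "length s' = length s - 1" "length t' = length t - 1"
    using assms(2,3) by (metis length_sort length_tl)+
  show ?thesis unfolding fits_inside_def dim_vec_def
  proof (intro conjI allI impI)
    show "length s' = length t'" using len assms(1) unfolding fits_inside_def by simp
  next
    fix i assume "i < length s'"
    then have "Suc i < length s" using len by simp
    then show "sort s' ! i < sort t' ! i"
      using assms unfolding fits_inside_def dim_vec_def by (simp add: nth_tl)
  qed
qed

lemma possible_arrangement_map_tl:
  assumes "\<forall>a\<in>set Xs. sorted a" and "possible_arrangement Xs"
  shows "possible_arrangement (map tl Xs)"
proof -
  obtain S where S: "length S = length Xs" "\<forall>j < length Xs. S ! j \<in> box_states (Xs ! j)"
    "\<forall>j. Suc j < length Xs \<longrightarrow> fits_inside (S ! j) (S ! Suc j)"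
    using assms(2) unfolding possible_arrangement_def by blast
  have "\<forall>j < length Xs. \<exists>s'. s' \<in> box_states (tl (Xs ! j)) \<and> sort s' = tl (sort (S ! j))"
    using tl_sort_box_state assms(1) S(2) by (metis nth_mem)
  then obtain g where g: "\<And>j. j < length Xs \<Longrightarrow>
      g j \<in> box_states (tl (Xs ! j)) \<and> sort (g j) = tl (sort (S ! j))"
    by metis
  show ?thesis unfolding possible_arrangement_def
    using g S(3) fits_inside_tl_sort
    by (intro exI[of _ "map g [0..<length Xs]"]) auto
qed

lemma is_box_tl: "is_box n a \<Longrightarrow> is_box (n - 1) (tl a)"
  unfolding is_box_def by (cases a) auto

lemma gozinta_map_tl: "gozinta n k A \<Longrightarrow> gozinta (n - 1) k (map tl A)"
  unfolding gozinta_def using is_box_tl possible_arrangement_map_tl[of "rev A"]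
  by (auto simp: is_box_def rev_map intro!: possible_arrangement_map_tl)

theorem proposition15:
  fixes n k :: nat
  assumes "n \<ge> 2" and "k \<ge> 1"
    and "\<exists>A. gozinta n k A"
  shows "\<exists>B. gozinta (n - 1) k B"
  \<comment> \<open>The reduction works for all \<open>n\<close> and \<open>k\<close>; the bounds only exclude degenerate cases.\<close>
  using assms(3) gozinta_map_tl by blast

end
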